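(* Let $\mathcal T=(S,\Sigma,\kappa)$ be an STS and $B\in\Sigma$. Suppose there exist $m\ge1$, finite sequences $\mathcal A_j=(A^{(j)}_0,\dots,A^{(j)}_{n_j})\in\Sigma^{n_j+1}$ for $0\le j<m$, and $p>0$ such that: (1) for every $\mu\in\mathrm{Dist}(S)$, $\mathbb P^{\mathcal T}_\mu\big(\bigvee_{0\le j<m}\mathbf{GF}\phi_{\mathcal A_j}\big)=1$; (2) for every $0\le j<m$ and every $\nu\in\mathrm{Dist}(S)$ such that $\nu_{\mathcal A_j}$ is well-defined and $\nu_{\mathcal A_j}(\widetilde B)<1$, we have $\mathbb P^{\mathcal T}_{(\nu_{\mathcal A_j})_{\overline{\widetilde B}}}(\mathbf F B)\ge p$. Then $\mathcal T$ is decisive with respect to $B$.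
   Context: A stochastic transition system (STS) is a triple $\mathcal T=(S,\Sigma,\kappa)$ where $(S,\Sigma)$ is a measurable space and $\kappa:S\times\Sigma\to[0,1]$ is a Markov kernel. $\mathrm{Dist}(S)$ is the set of probability distributions on $(S,\Sigma)$, $\delta_s$ the Dirac distribution at $s$. $\mathrm{Cyl}(A_0,\dots,A_k)=\{s_0s_1\ldots\in S^\omega: s_j\in A_j,\ 0\le j\le k\}$; $\mathbb P^{\mathcal T}_\mu$ is the probability measure on runs (with the $\sigma$-algebra generated by cylinders) induced by initial distribution $\mu$ and kernel $\kappa$. For $\rho=s_0s_1\ldots$, $\rho_{\ge k}=s_ks_{k+1}\ldots$. $\overline C=S\setminus C$; $\mathbf F B$: runs visiting $B$ at some step. $\widetilde B=\{s\in S:\mathbb P^{\mathcal T}_{\delta_s}(\mathbf F B)=0\}$ (assumed measurable). $\mathcal T$ is decisive w.r.t. $B$ if for every $\mu\in\mathrm{Dist}(S)$, $\mathbb P^{\mathcal T}_\mu(\mathbf F B\vee\mathbf F\widetilde B)=1$. For $\mathcal A=(A_0,\dots,A_n)$, $\phi_{\mathcal A}$ is the set of runs with $s_j\in A_j$ for $0\le j\le n$, and $\mathbf{GF}\phi_{\mathcal A}$ the set of runs $\rho$ with $\rho_{\ge k}\in\phi_{\mathcal A}$ for infinitely many $k$. For $\nu$ with $\mathbb P^{\mathcal T}_\nu(\mathrm{Cyl}(A_0,\dots,A_n))>0$, $\nu_{\mathcal A}$ is well-defined and equals $C\mapsto\mathbb P^{\mathcal T}_\nu(\mathrm{Cyl}(A_0,\dots,A_{n-1},A_n\cap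 C))/\mathbb P^{\mathcal T}_\nu(\mathrm{Cyl}(A_0,\dots,A_n))$; for a set $A$ with $\nu(A)>0$, $\nu_A=\nu(\cdot\cap A)/\nu(A)$. *)

theory Defs
  imports "HOL-Probability.Probability"
begin

definition Dist :: "'a measure \<Rightarrow> 'a measure set" where
  "Dist M = {\<mu>. prob_space \<mu> \<and> sets \<mu> = sets M}"

definition markov_kernel :: "'a measure \<Rightarrow> ('a \<Rightarrow> 'a measure) \<Rightarrow> bool" where
  "markov_kernel M \<kappa> \<longleftrightarrow> \<kappa> \<in> M \<rightarrow>\<^sub>M prob_algebra M"

definition cyl :: "'a measure \<Rightarrow> 'a set list \<Rightarrow> 'a stream set" where
  "cyl M As = {\<omega> \<in> streams (space M). \<forall>j < length As. \<omega> !! j \<in> As ! j}"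

fun kint :: "('a \<Rightarrow> 'a measure) \<Rightarrow> 'a set list \<Rightarrow> 'a \<Rightarrow> ennreal" where
  "kint \<kappa> [] x = 1"
| "kint \<kappa> (A # As) x = (\<integral>\<^sup>+ y. indicator A y * kint \<kappa> As y \<partial>\<kappa> x)"

fun cyl_prob :: "('a \<Rightarrow> 'a measure) \<Rightarrow> 'a measure \<Rightarrow> 'a set list \<Rightarrow> ennreal" where
  "cyl_prob \<kappa> \<mu> [] = 1"
| "cyl_prob \<kappa> \<mu> (A # As) = (\<integral>\<^sup>+ x. indicator A x * kint \<kappa> As x \<partial>\<mu>)"

text \<open>P is the run measure induced by mu and kappa: a probability measure on the
  stream sigma-algebra (generated by cylinders) with the prescribed cylinder
  probabilities (this determines P uniquely).\<close>
definition is_path_measure ::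
  "'a measure \<Rightarrow> ('a \<Rightarrow> 'a measure) \<Rightarrow> 'a measure \<Rightarrow> 'a stream measure \<Rightarrow> bool" where
  "is_path_measure M \<kappa> \<mu> P \<longleftrightarrow> prob_space P \<and> sets P = sets (stream_space M) \<and>
     (\<forall>As. As \<noteq> [] \<longrightarrow> set As \<subseteq> sets M \<longrightarrow> emeasure P (cyl M As) = cyl_prob \<kappa> \<mu> As)"

definition Ev :: "'a measure \<Rightarrow> 'a set \<Rightarrow> 'a stream set" where
  "Ev M B = {\<omega> \<in> streams (space M). \<exists>k. \<omega> !! k \<in> B}"

definition Btilde :: "'a measure \<Rightarrow> ('a measure \<Rightarrow> 'a stream measure) \<Rightarrow> 'a set \<Rightarrow> 'a set" where
  "Btilde M P B = {s \<in> space M. measure (P (return M s)) (Ev M B) = 0}"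

definition decisive :: "'a measure \<Rightarrow> ('a measure \<Rightarrow> 'a stream measure) \<Rightarrow> 'a set \<Rightarrow> bool" where
  "decisive M P B \<longleftrightarrow>
     (\<forall>\<mu> \<in> Dist M. measure (P \<mu>) (Ev M B \<union> Ev M (Btilde M P B)) = 1)"

text \<open>GF phi_A: runs whose suffix lies in phi_A infinitely often (phi_A = cyl).\<close>
definition GF :: "'a measure \<Rightarrow> 'a set list \<Rightarrow> 'a stream set" where
  "GF M As = {\<omega> \<in> streams (space M). \<exists>\<^sub>\<infinity> k. sdrop k \<omega> \<in> cyl M As}"

definition cond_seq ::
  "'a measure \<Rightarrow> ('a measure \<Rightarrow> 'a stream measure) \<Rightarrow> 'a measure \<Rightarrow> 'a set list \<Rightarrow> 'a measure" where
  "cond_seq M P \<nu> As = measure_of (space M) (sets M)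
     (\<lambda>C. emeasure (P \<nu>) (cyl M (butlast As @ [last As \<inter> C])) / emeasure (P \<nu>) (cyl M As))"

definition cond_set :: "'a measure \<Rightarrow> 'a measure \<Rightarrow> 'a set \<Rightarrow> 'a measure" where
  "cond_set M \<nu> A = measure_of (space M) (sets M) (\<lambda>C. emeasure \<nu> (C \<inter> A) / emeasure \<nu> A)"

end

theory Submission
  imports Defs
begin

text \<open>Write \<open>Z = B \<union> Btilde M P B\<close> and call a run avoiding if it never visits \<open>Z\<close>; decisiveness
  says that for every initial distribution almost no run is avoiding. Fix \<open>L = A j\<close> and an event
  \<open>G\<close> determined by the first \<open>k + 1\<close> states. By the Markov property, conditioning \<open>P \<mu>\<close> on
  \<open>G\<close> and on the window \<open>L\<close> being matched from time \<open>k\<close> on yields, at the end of the window,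
  the law \<open>\<nu>\<^sub>L\<close> of hypothesis (2), where \<open>\<nu>\<close> is the conditioned law at time \<open>k\<close>. An avoiding run
  ends the window outside \<open>Btilde M P B\<close> and never reaches \<open>B\<close> afterwards, so hypothesis (2)
  bounds the avoiding part of this event by the factor \<open>1 - p\<close>.

  Windows starting at the times \<open>r + i |L|\<close> do not overlap. Decomposing the runs that avoid
  \<open>Z\<close> until one of these windows after the \<open>N\<close>-th is matched according to the first such window,
  the factor \<open>1 - p\<close> carries over; letting \<open>N \<rightarrow> \<infinity>\<close> shows that almost no avoiding run
  matches infinitely many of them. By pigeonhole on \<open>r\<close>, almost no avoiding run lies in
  \<open>GF M L\<close>, whereas by hypothesis (1) almost every run lies in some \<open>GF M (A j)\<close>.\<close>

section \<open>Kernel chains and cylinders\<close>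

text \<open>For the chain \<open>X\<close> started in \<open>x\<close>, \<open>kernel_chain \<kappa> [A\<^sub>1, ..., A\<^sub>n] h x\<close> is the expectation
  of \<open>h X\<^sub>n\<close> on the event \<open>X\<^sub>1 \<in> A\<^sub>1, ..., X\<^sub>n \<in> A\<^sub>n\<close>; \<open>cyl_weight\<close> also requires \<open>X\<^sub>0 \<in> A\<^sub>0\<close>.\<close>

fun kernel_chain :: "('a \<Rightarrow> 'a measure) \<Rightarrow> 'a set list \<Rightarrow> ('a \<Rightarrow> ennreal) \<Rightarrow> 'a \<Rightarrow> ennreal" where
  "kernel_chain \<kappa> [] h x = h x"
| "kernel_chain \<kappa> (A # As) h x = (\<integral>\<^sup>+ y. indicator A y * kernel_chain \<kappa> As h y \<partial>\<kappa> x)"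

lemma kint_eq_kernel_chain: "kint \<kappa> As = kernel_chain \<kappa> As (\<lambda>_. 1)"
  by (induction As) auto

lemma kernel_chain_append: "kernel_chain \<kappa> (As @ Bs) h = kernel_chain \<kappa> As (kernel_chain \<kappa> Bs h)"
  by (induction As) (auto intro!: ext)

fun cyl_weight :: "('a \<Rightarrow> 'a measure) \<Rightarrow> 'a set list \<Rightarrow> ('a \<Rightarrow> ennreal) \<Rightarrow> 'a \<Rightarrow> ennreal" where
  "cyl_weight \<kappa> [] h x = h x"
| "cyl_weight \<kappa> (A # As) h x = indicator A x * kernel_chain \<kappa> As h x"

lemma cyl_prob_eq_cyl_weight: "As \<noteq> [] \<Longrightarrow> cyl_prob \<kappa> \<mu> As = (\<integral>\<^sup>+ x. cyl_weight \<kappa> As (\<lambda>_. 1) x \<partial>\<mu>)"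
  by (cases As) (auto simp: kint_eq_kernel_chain)

lemma cyl_weight_append: "L \<noteq> [] \<Longrightarrow> cyl_weight \<kappa> L (kernel_chain \<kappa> As h) = cyl_weight \<kappa> (L @ As) h"
  by (cases L) (auto simp: kernel_chain_append)

fun restrict_last :: "'a set list \<Rightarrow> 'a set \<Rightarrow> 'a set list" where
  "restrict_last [] C = []"
| "restrict_last [A] C = [A \<inter> C]"
| "restrict_last (A # B # As) C = A # restrict_last (B # As) C"

lemma restrict_last_eq: "L \<noteq> [] \<Longrightarrow> restrict_last L C = butlast L @ [last L \<inter> C]"
  by (induction L C rule: restrict_last.induct) auto

lemma restrict_last_eq_Nil_iff[simp]: "restrict_last L C = [] \<longleftrightarrow> L = []"
  by (induction L C rule: restrict_last.induct) auto

lemma set_restrict_last: "set L \<subseteq> sets M \<Longrightarrow> C \<in> sets M \<Longrightarrow> set (restrict_last L C) \<subseteq> sets M"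
  by (induction L C rule: restrict_last.induct) auto

lemma cyl_weight_restrict_last:
  "L \<noteq> [] \<Longrightarrow> cyl_weight \<kappa> L (\<lambda>x. indicator C x * h x) = cyl_weight \<kappa> (restrict_last L C) h"
proof (induction L C rule: restrict_last.induct)
  case (3 A B As C)
  then obtain B' Bs' where "restrict_last (B # As) C = B' # Bs'"
    by (cases "restrict_last (B # As) C") auto
  with 3 show ?case
    by (auto simp: fun_eq_iff)
qed (auto simp: fun_eq_iff indicator_inter_arith mult.assoc)

definition cyl_from :: "'a measure \<Rightarrow> nat \<Rightarrow> 'a set list \<Rightarrow> 'a stream set" where
  "cyl_from M k As = {\<omega> \<in> streams (space M). \<forall>l < length As. \<omega> !! (k + l) \<in> As ! l}"

lemma cyl_eq_cyl_from: "cyl M As = cyl_from M 0 As"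
  by (simp add: cyl_def cyl_from_def)

lemma cyl_from_Nil[simp]: "cyl_from M k [] = streams (space M)"
  by (simp add: cyl_from_def)

lemma cyl_from_singleton: "cyl_from M k [C] = {\<omega> \<in> streams (space M). \<omega> !! k \<in> C}"
  by (simp add: cyl_from_def)

lemma cyl_from_subset: "cyl_from M k As \<subseteq> streams (space M)"
  by (auto simp: cyl_from_def)

lemma cyl_from_Cons: "cyl_from M k (A # As) = cyl_from M k [A] \<inter> cyl_from M (Suc k) As"
  by (auto simp: cyl_from_def less_Suc_eq_0_disj)

lemma cyl_from_append:
  "cyl_from M k (As @ Bs) = cyl_from M k As \<inter> cyl_from M (k + length As) Bs"
proof (induction As arbitrary: k)
  case (Cons A As)
  then show ?case
    by (simp add: cyl_from_Cons[of M k A As] cyl_from_Cons[of M k A "As @ Bs"] Int_assoc)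
qed (use cyl_from_subset in auto)

lemma cyl_restrict_last_append:
  assumes "L \<noteq> []"
  shows "cyl M (restrict_last L A @ As) = cyl M L \<inter> cyl_from M (length L - 1) (A # As)"
proof -
  have L: "L = butlast L @ [last L]"
    using assms by simp
  have "cyl M L = cyl M (butlast L) \<inter> cyl_from M (length L - 1) [last L]"
    by (subst L) (simp add: cyl_eq_cyl_from cyl_from_append)
  then show ?thesis
    using assms by (auto simp: restrict_last_eq cyl_eq_cyl_from cyl_from_append cyl_from_Cons[of M _ A]
      cyl_from_Cons[of M _ "last L \<inter> A"] cyl_from_singleton)
qed

lemma cyl_restrict_last:
  "L \<noteq> [] \<Longrightarrow> cyl M (restrict_last L C) = cyl M L \<inter> cyl_from M (length L - 1) [C]"
  using cyl_restrict_last_append[of L M C "[]"] by simp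

lemma vimage_sdrop_cyl: "sdrop k -` cyl M As \<inter> streams (space M) = cyl_from M k As"
  by (auto simp: cyl_def cyl_from_def streams_iff_snth sdrop_snth)

lemma vimage_sdrop_cyl_from:
  "sdrop k -` cyl_from M n As \<inter> streams (space M) = cyl_from M (k + n) As"
  by (auto simp: cyl_from_def streams_iff_snth sdrop_snth add.assoc)

lemma cyl_eq_scylinder: "cyl M As = scylinder (space M) As"
proof (induction As)
  case (Cons A As)
  have "(\<forall>j<Suc (length As). \<omega> !! j \<in> (A # As) ! j) \<longleftrightarrow>
      shd \<omega> \<in> A \<and> (\<forall>j<length As. stl \<omega> !! j \<in> As ! j)" for \<omega>
    by (auto simp: less_Suc_eq_0_disj)
  with Cons show ?case
    by (auto simp: cyl_def streams_stl)
qed (simp add: cyl_def)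

lemma sets_cyl: "set As \<subseteq> sets M \<Longrightarrow> cyl M As \<in> sets (stream_space M)"
  by (simp add: cyl_eq_scylinder sets_scylinder subset_iff)

lemma sets_cyl_from: "set As \<subseteq> sets M \<Longrightarrow> cyl_from M k As \<in> sets (stream_space M)"
  using measurable_sets[OF measurable_sdrop sets_cyl, of As M k]
  by (simp add: vimage_sdrop_cyl space_stream_space)

section \<open>Events determined by a finite prefix\<close>

definition prefix_cyls :: "'a measure \<Rightarrow> nat \<Rightarrow> 'a stream set set" where
  "prefix_cyls M k = {cyl M L | L. length L = Suc k \<and> set L \<subseteq> sets M}"

definition prefix_events :: "'a measure \<Rightarrow> nat \<Rightarrow> 'a stream set set" where
  "prefix_events M k = sigma_sets (streams (space M)) (prefix_cyls M k)"

lemma prefix_cyls_subset_Pow: "prefix_cyls M k \<subseteq> Pow (streams (space M))"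
  by (auto simp: prefix_cyls_def cyl_def)

lemma Int_stable_prefix_cyls: "Int_stable (prefix_cyls M k)"
proof (rule Int_stableI)
  fix X Y assume "X \<in> prefix_cyls M k" "Y \<in> prefix_cyls M k"
  then obtain L1 L2 where L: "X = cyl M L1" "Y = cyl M L2" "length L1 = Suc k" "length L2 = Suc k"
    "set L1 \<subseteq> sets M" "set L2 \<subseteq> sets M"
    by (auto simp: prefix_cyls_def)
  then have "X \<inter> Y = cyl M (map2 (\<inter>) L1 L2)"
    by (auto simp: cyl_def)
  moreover have "set (map2 (\<inter>) L1 L2) \<subseteq> sets M"
  proof
    fix X assume "X \<in> set (map2 (\<inter>) L1 L2)"
    then obtain u v where "(u, v) \<in> set (zip L1 L2)" "X = u \<inter> v"
      by auto
    then show "X \<in> sets M"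
      using L by (auto dest: set_zip_leftD set_zip_rightD)
  qed
  moreover have "length (map2 (\<inter>) L1 L2) = Suc k"
    using L by simp
  ultimately show "X \<inter> Y \<in> prefix_cyls M k"
    unfolding prefix_cyls_def by blast
qed

lemma sigma_algebra_prefix_events: "sigma_algebra (streams (space M)) (prefix_events M k)"
  unfolding prefix_events_def by (rule sigma_algebra_sigma_sets[OF prefix_cyls_subset_Pow])

lemma prefix_events_subset_sets: "prefix_events M k \<subseteq> sets (stream_space M)"
proof -
  have "prefix_cyls M k \<subseteq> sets (stream_space M)"
    by (auto simp: prefix_cyls_def sets_cyl)
  then show ?thesis
    unfolding prefix_events_def using sets.sigma_sets_subset by (metis space_stream_space)
qed

lemma cyl_from_replicate_space: "cyl_from M k (replicate n (space M)) = streams (space M)"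
  by (auto simp: cyl_from_def snth_in)

lemma cyl_from_in_prefix_events:
  assumes "set L \<subseteq> sets M" "k + length L \<le> Suc k'"
  shows "cyl_from M k L \<in> prefix_events M k'"
proof -
  define L' where "L' = replicate k (space M) @ L @ replicate (Suc k' - k - length L) (space M)"
  have "cyl_from M k L = cyl M L'"
    by (simp add: L'_def cyl_eq_cyl_from cyl_from_append cyl_from_replicate_space
        Int_absorb1[OF cyl_from_subset] Int_absorb2[OF cyl_from_subset])
  moreover have "length L' = Suc k'" "set L' \<subseteq> sets M"
    using assms by (auto simp: L'_def)
  ultimately show ?thesis
    unfolding prefix_events_def prefix_cyls_def by blast
qed

lemma streams_in_prefix_cyls: "streams (space M) \<in> prefix_cyls M k"
proof -
  have "streams (space M) = cyl M (replicate (Suc k) (space M))"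
    by (simp add: cyl_eq_cyl_from cyl_from_replicate_space del: replicate.simps)
  then show ?thesis
    unfolding prefix_cyls_def by (intro CollectI exI[of _ "replicate (Suc k) (space M)"]) auto
qed

lemma prefix_events_mono:
  assumes "k \<le> k'"
  shows "prefix_events M k \<subseteq> prefix_events M k'"
proof -
  have "prefix_cyls M k \<subseteq> prefix_events M k'"
    using assms by (auto simp: prefix_cyls_def cyl_eq_cyl_from intro!: cyl_from_in_prefix_events)
  then show ?thesis
    unfolding prefix_events_def by (rule sigma_sets_mono)
qed

definition avoiding :: "'a measure \<Rightarrow> 'a set \<Rightarrow> 'a stream set" where
  "avoiding M Z = {\<omega> \<in> streams (space M). \<forall>t. \<omega> !! t \<notin> Z}"

definition avoiding_upto :: "'a measure \<Rightarrow> nat \<Rightarrow> 'a set \<Rightarrow> 'a stream set" where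
  "avoiding_upto M s Z = {\<omega> \<in> streams (space M). \<forall>t<s. \<omega> !! t \<notin> Z}"

lemma avoiding_upto_in_prefix_events:
  assumes "Z \<in> sets M"
  shows "avoiding_upto M s Z \<in> prefix_events M s"
proof -
  interpret sigma_algebra "streams (space M)" "prefix_events M s"
    by (rule sigma_algebra_prefix_events)
  have "avoiding_upto M s Z = streams (space M) - (\<Union>t<s. cyl_from M t [Z])"
    by (auto simp: avoiding_upto_def cyl_from_singleton)
  also have "\<dots> \<in> prefix_events M s"
    using assms by (intro Diff top finite_UN cyl_from_in_prefix_events) auto
  finally show ?thesis .
qed

lemma sets_avoiding: "Z \<in> sets M \<Longrightarrow> avoiding M Z \<in> sets (stream_space M)"
proof -
  assume [measurable]: "Z \<in> sets M"
  have "{\<omega> \<in> space (stream_space M). \<forall>t. \<omega> !! t \<notin> Z} \<in> sets (stream_space M)"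
    by measurable
  then show ?thesis
    by (simp add: avoiding_def space_stream_space)
qed

lemma sets_Ev: "B \<in> sets M \<Longrightarrow> Ev M B \<in> sets (stream_space M)"
proof -
  assume [measurable]: "B \<in> sets M"
  have "{\<omega> \<in> space (stream_space M). \<exists>k. \<omega> !! k \<in> B} \<in> sets (stream_space M)"
    by measurable
  then show ?thesis
    by (simp add: Ev_def space_stream_space)
qed

lemma emeasure_eq_on_sigma_sets:
  assumes E: "Int_stable E" "E \<subseteq> Pow \<Omega>" "\<Omega> \<in> E"
    and N: "finite_measure N1" "finite_measure N2" "sigma_sets \<Omega> E \<subseteq> sets N1" "sigma_sets \<Omega> E \<subseteq> sets N2"
    and eq: "\<And>X. X \<in> E \<Longrightarrow> emeasure N1 X = emeasure N2 X"
    and X: "X \<in> sigma_sets \<Omega> E"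
  shows "emeasure N1 X = emeasure N2 X"
  using E(1,2) X
proof (induction rule: sigma_sets_induct_disjoint)
  case (compl X)
  have "X \<subseteq> \<Omega>"
    using compl(1) E(2) sigma_sets_into_sp by blast
  moreover have "\<Omega> \<in> sets N1" "\<Omega> \<in> sets N2" "X \<in> sets N1" "X \<in> sets N2"
    using N(3,4) compl(1) E(3) by auto
  ultimately show ?case
    using N(1,2) eq[OF E(3)] compl(2)
    by (simp add: emeasure_Diff finite_measure.emeasure_finite)
next
  case (union A)
  then have "range A \<subseteq> sets N1" "range A \<subseteq> sets N2"
    using N(3,4) by auto
  with union show ?case
    by (simp add: suminf_emeasure[symmetric])
qed (auto simp: eq)

lemma measure_of_eq_measure:
  assumes "sets N = sets M" "\<And>A. A \<in> sets M \<Longrightarrow> f A = emeasure N A"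
  shows "measure_of (space M) (sets M) f = N"
proof -
  have "measure_of (space M) (sets M) f = measure_of (space M) (sets M) (emeasure N)"
    using assms(2) by (intro measure_of_eq[OF sets.space_closed]) (simp add: sets.sigma_sets_eq)
  also have "\<dots> = measure_of (space N) (sets N) (emeasure N)"
    using assms(1) sets_eq_imp_space_eq[OF assms(1)] by simp
  finally show ?thesis
    by (simp add: measure_of_of_measure)
qed

lemma prob_space_eqI_measure:
  assumes "prob_space N1" "prob_space N2" "sets N1 = sets N2"
    and "\<And>A. A \<in> sets N1 \<Longrightarrow> measure N1 A = measure N2 A"
  shows "N1 = N2"
  using assms by (intro measure_eqI) (simp_all add: finite_measure.emeasure_eq_measure prob_space.axioms(1))

lemma cond_set_eq_uniform_measure:
  assumes "sets \<nu> = sets M" "A \<in> sets M"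
  shows "cond_set M \<nu> A = uniform_measure \<nu> A"
  unfolding cond_set_def using assms by (intro measure_of_eq_measure) (simp_all add: Int_commute)

lemma (in finite_measure) measure_Int_UN_le:
  assumes E: "E \<in> sets M" and A: "range A \<subseteq> sets M"
    and le: "\<And>k. measure M (E \<inter> disjointed A k) \<le> c * measure M (disjointed A k)"
  shows "measure M (E \<inter> (\<Union>k. A k)) \<le> c * measure M (\<Union>k. A k)"
proof -
  have "range (disjointed A) \<subseteq> sets M"
    using A by (simp add: sets.range_disjointed_sets)
  moreover have "disjoint_family (\<lambda>k. E \<inter> disjointed A k)"
    using disjoint_family_disjointed[of A] by (auto simp: disjoint_family_on_def)
  ultimately have sums: "(\<lambda>k. measure M (disjointed A k)) sums measure M (\<Union>k. disjointed A k)"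
    "(\<lambda>k. measure M (E \<inter> disjointed A k)) sums measure M (\<Union>k. E \<inter> disjointed A k)"
    using E disjoint_family_disjointed[of A]
    by (intro finite_measure_UNION; auto)+
  moreover have "(\<Union>k. E \<inter> disjointed A k) = E \<inter> (\<Union>k. A k)"
    by (simp flip: UN_disjointed_eq[of A])
  ultimately show ?thesis
    using sums_le[OF le sums(2) sums_mult[OF sums(1)]] by (simp add: UN_disjointed_eq)
qed

lemma (in finite_measure) measure_eq_0_if_le_decseq:
  assumes R: "R \<in> sets M" and H: "range H \<subseteq> sets M" "decseq H" "(\<Inter>N. H N) \<subseteq> R"
    and c: "0 \<le> c" "c < 1" and le: "\<And>N. measure M R \<le> c * measure M (H N)"
  shows "measure M R = 0"
proof -
  have "(\<lambda>N. measure M (H N)) \<longlonglongrightarrow> measure M (\<Inter>N. H N)"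
    using H by (intro finite_Lim_measure_decseq) auto
  then have "measure M R \<le> c * measure M (\<Inter>N. H N)"
    using le by (intro LIMSEQ_le_const[OF tendsto_mult_left]) auto
  also have "\<dots> \<le> c * measure M R"
    using H R c by (intro mult_left_mono finite_measure_mono) auto
  finally show ?thesis
    using c measure_nonneg[of M R] by (simp add: mult_le_cancel_right1)
qed

section \<open>Path measures and the Markov property\<close>

lemma Dist_D:
  assumes "\<mu> \<in> Dist M"
  shows "prob_space \<mu>" "sets \<mu> = sets M" "space \<mu> = space M"
  using assms unfolding Dist_def by (auto dest: sets_eq_imp_space_eq)

lemma is_path_measure_unique:
  assumes "is_path_measure M \<kappa> \<mu> Q1" "is_path_measure M \<kappa> \<mu> Q2"
  shows "Q1 = Q2"
proof (rule stream_space_eq_scylinder[where G="sets M" and C="{space M}" and S=M])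
  show "prob_space Q1" "prob_space Q2" "sets Q1 = sets (stream_space M)" "sets Q2 = sets (stream_space M)"
    using assms by (auto simp: is_path_measure_def)
  show "Int_stable (sets M)" by (auto simp: Int_stable_def)
  show "countable {space M}" "{space M} \<subseteq> sets M" "\<Union>{space M} = space M" "sets M \<subseteq> Pow (space M)"
    by (auto dest: sets.sets_into_space)
  fix xs :: "'a set list" assume "xs \<noteq> []" "xs \<in> lists (sets M)"
  then show "emeasure Q1 (scylinder (space M) xs) = emeasure Q2 (scylinder (space M) xs)"
    using assms by (auto simp: is_path_measure_def in_lists_conv_set subset_iff cyl_eq_scylinder[symmetric])
qed simp

locale path_system =
  fixes M :: "'a measure" and \<kappa> :: "'a \<Rightarrow> 'a measure" and P :: "'a measure \<Rightarrow> 'a stream measure"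
  assumes kernel: "markov_kernel M \<kappa>"
    and path: "\<forall>\<mu> \<in> Dist M. is_path_measure M \<kappa> \<mu> (P \<mu>)"
begin

lemma measurable_kernel[measurable]: "\<kappa> \<in> M \<rightarrow>\<^sub>M subprob_algebra M"
  using kernel unfolding markov_kernel_def by (rule measurable_prob_algebraD)

lemma kernel_prob_space:
  assumes "x \<in> space M"
  shows "prob_space (\<kappa> x)" "sets (\<kappa> x) = sets M" "space (\<kappa> x) = space M"
proof -
  have "\<kappa> x \<in> space (prob_algebra M)"
    using kernel assms unfolding markov_kernel_def by (rule measurable_space)
  then show "prob_space (\<kappa> x)" "sets (\<kappa> x) = sets M"
    by (auto simp: space_prob_algebra)
  then show "space (\<kappa> x) = space M"
    using sets_eq_imp_space_eq by blast
qed

lemma measurable_kernel_chain[measurable]: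
  assumes "set As \<subseteq> sets M" "h \<in> borel_measurable M"
  shows "kernel_chain \<kappa> As h \<in> borel_measurable M"
  using assms(1)
proof (induction As)
  case (Cons A As)
  then have [measurable]: "A \<in> sets M" "kernel_chain \<kappa> As h \<in> borel_measurable M"
    by auto
  have "(\<lambda>x. \<integral>\<^sup>+ y. indicator A y * kernel_chain \<kappa> As h y \<partial>\<kappa> x) \<in> borel_measurable M"
    by (rule measurable_compose[OF measurable_kernel nn_integral_measurable_subprob_algebra])
      measurable
  then show ?case
    by (simp add: kernel_chain.simps(2)[abs_def])
qed (use assms(2) in \<open>simp add: kernel_chain.simps(1)[abs_def]\<close>)

lemma measurable_kernel_integrand:
  assumes "A \<in> sets M" "set As \<subseteq> sets M" "h \<in> borel_measurable M" "x \<in> space M"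
  shows "(\<lambda>y. indicator A y * kernel_chain \<kappa> As h y) \<in> borel_measurable (\<kappa> x)"
  using assms by (simp add: measurable_cong_sets[OF kernel_prob_space(2) refl])

lemma kernel_chain_cong:
  assumes "\<And>y. y \<in> space M \<Longrightarrow> f y = g y" "x \<in> space M"
  shows "kernel_chain \<kappa> As f x = kernel_chain \<kappa> As g x"
  using assms(2)
  by (induction As arbitrary: x) (auto intro!: nn_integral_cong simp: assms(1) kernel_prob_space)

lemma kernel_chain_mono:
  assumes "\<And>y. y \<in> space M \<Longrightarrow> f y \<le> g y" "x \<in> space M"
  shows "kernel_chain \<kappa> As f x \<le> kernel_chain \<kappa> As g x"
  using assms(2)
  by (induction As arbitrary: x)
    (auto intro!: nn_integral_mono mult_left_mono simp: assms(1) kernel_prob_space)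

lemma kernel_chain_cmult:
  assumes "set As \<subseteq> sets M" "h \<in> borel_measurable M" "x \<in> space M"
  shows "kernel_chain \<kappa> As (\<lambda>y. c * h y) x = c * kernel_chain \<kappa> As h x"
  using assms(1,3)
proof (induction As arbitrary: x)
  case (Cons A As)
  have "kernel_chain \<kappa> (A # As) (\<lambda>y. c * h y) x =
      (\<integral>\<^sup>+ y. c * (indicator A y * kernel_chain \<kappa> As h y) \<partial>\<kappa> x)"
    using Cons by (auto intro!: nn_integral_cong simp: kernel_prob_space mult.left_commute)
  also have "\<dots> = c * kernel_chain \<kappa> (A # As) h x"
    using Cons assms(2) by (simp add: nn_integral_cmult measurable_kernel_integrand)
  finally show ?case .
qed simp

lemma kernel_chain_add:
  assumes "set As \<subseteq> sets M" "f \<in> borel_measurable M" "g \<in> borel_measurable M" "x \<in> space M"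
  shows "kernel_chain \<kappa> As (\<lambda>y. f y + g y) x = kernel_chain \<kappa> As f x + kernel_chain \<kappa> As g x"
  using assms(1,4)
proof (induction As arbitrary: x)
  case (Cons A As)
  have "kernel_chain \<kappa> (A # As) (\<lambda>y. f y + g y) x = (\<integral>\<^sup>+ y. indicator A y * kernel_chain \<kappa> As f y
      + indicator A y * kernel_chain \<kappa> As g y \<partial>\<kappa> x)"
    using Cons by (auto intro!: nn_integral_cong simp: kernel_prob_space distrib_left)
  also have "\<dots> = kernel_chain \<kappa> (A # As) f x + kernel_chain \<kappa> (A # As) g x"
    using Cons assms(2,3) by (simp add: nn_integral_add measurable_kernel_integrand)
  finally show ?case .
qed simp

lemma kernel_chain_SUP:
  assumes "set As \<subseteq> sets M" "\<And>i. U i \<in> borel_measurable M" "incseq U" "x \<in> space M"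
  shows "kernel_chain \<kappa> As (SUP i. U i) x = (SUP i. kernel_chain \<kappa> As (U i) x)"
  using assms(1,4)
proof (induction As arbitrary: x)
  case Nil
  then show ?case
    by (simp add: image_comp)
next
  case (Cons A As)
  have "kernel_chain \<kappa> As (SUP i. U i) y = (SUP i. kernel_chain \<kappa> As (U i) y)" if "y \<in> space M" for y
    using Cons that by (simp add: Sup_fun_def image_comp)
  then have "kernel_chain \<kappa> (A # As) (SUP i. U i) x =
      (\<integral>\<^sup>+ y. (SUP i. indicator A y * kernel_chain \<kappa> As (U i) y) \<partial>\<kappa> x)"
    using Cons by (auto intro!: nn_integral_cong simp: kernel_prob_space SUP_mult_left_ennreal
        simp del: kernel_chain.simps(1))
  also have "\<dots> = (SUP i. \<integral>\<^sup>+ y. indicator A y * kernel_chain \<kappa> As (U i) y \<partial>\<kappa> x)"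
  proof (rule nn_integral_monotone_convergence_SUP_AE)
    have "U i y \<le> U (Suc i) y" for i y
      using \<open>incseq U\<close> by (simp add: incseq_Suc_iff le_fun_def)
    then show "AE y in \<kappa> x. indicator A y * kernel_chain \<kappa> As (U i) y
        \<le> indicator A y * kernel_chain \<kappa> As (U (Suc i)) y" for i
      using Cons by (auto intro!: AE_I2 mult_left_mono kernel_chain_mono simp: kernel_prob_space)
  qed (use Cons assms(2) in \<open>simp add: measurable_kernel_integrand\<close>)
  finally show ?case
    by (simp add: Sup_fun_def image_comp)
qed

lemma measurable_cyl_weight[measurable]:
  "set L \<subseteq> sets M \<Longrightarrow> h \<in> borel_measurable M \<Longrightarrow> cyl_weight \<kappa> L h \<in> borel_measurable M"
  by (cases L) (auto simp: cyl_weight.simps(2)[abs_def] cyl_weight.simps(1)[abs_def]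
      intro!: borel_measurable_times_ennreal measurable_kernel_chain)

lemma cyl_weight_cong:
  "(\<And>y. y \<in> space M \<Longrightarrow> f y = g y) \<Longrightarrow> x \<in> space M \<Longrightarrow> cyl_weight \<kappa> L f x = cyl_weight \<kappa> L g x"
  by (cases L) (simp_all add: kernel_chain_cong[of f g])

lemma cyl_weight_cmult:
  "set L \<subseteq> sets M \<Longrightarrow> h \<in> borel_measurable M \<Longrightarrow> x \<in> space M \<Longrightarrow>
    cyl_weight \<kappa> L (\<lambda>y. c * h y) x = c * cyl_weight \<kappa> L h x"
  by (cases L) (simp_all add: kernel_chain_cmult mult.left_commute)

lemma cyl_weight_add:
  "set L \<subseteq> sets M \<Longrightarrow> f \<in> borel_measurable M \<Longrightarrow> g \<in> borel_measurable M \<Longrightarrow> x \<in> space M \<Longrightarrow>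
    cyl_weight \<kappa> L (\<lambda>y. f y + g y) x = cyl_weight \<kappa> L f x + cyl_weight \<kappa> L g x"
  by (cases L) (simp_all add: kernel_chain_add distrib_left)

lemma path_measure:
  assumes "\<mu> \<in> Dist M"
  shows "prob_space (P \<mu>)" "sets (P \<mu>) = sets (stream_space M)" "space (P \<mu>) = streams (space M)"
proof -
  show "prob_space (P \<mu>)" and sets: "sets (P \<mu>) = sets (stream_space M)"
    using path assms unfolding is_path_measure_def by auto
  show "space (P \<mu>) = streams (space M)"
    using sets_eq_imp_space_eq[OF sets] by (simp add: space_stream_space)
qed

lemma emeasure_path_cyl:
  assumes "\<mu> \<in> Dist M" "As \<noteq> []" "set As \<subseteq> sets M"
  shows "emeasure (P \<mu>) (cyl M As) = (\<integral>\<^sup>+ x. cyl_weight \<kappa> As (\<lambda>_. 1) x \<partial>\<mu>)"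
  using path assms by (simp add: is_path_measure_def cyl_prob_eq_cyl_weight)

lemma nn_integral_cyl_weight_SUP:
  assumes \<mu>: "\<mu> \<in> Dist M" and L: "set L \<subseteq> sets M"
    and U: "\<And>i. U i \<in> borel_measurable M" "incseq U"
  shows "(\<integral>\<^sup>+ x. cyl_weight \<kappa> L (SUP i. U i) x \<partial>\<mu>) = (SUP i. \<integral>\<^sup>+ x. cyl_weight \<kappa> L (U i) x \<partial>\<mu>)"
proof -
  have "cyl_weight \<kappa> L (SUP i. U i) x = (SUP i. cyl_weight \<kappa> L (U i) x)" if "x \<in> space M" for x
    using L U that by (cases L) (simp_all add: kernel_chain_SUP SUP_mult_left_ennreal image_comp)
  then have "(\<integral>\<^sup>+ x. cyl_weight \<kappa> L (SUP i. U i) x \<partial>\<mu>) = (\<integral>\<^sup>+ x. (SUP i. cyl_weight \<kappa> L (U i) x) \<partial>\<mu>)"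
    by (intro nn_integral_cong) (simp add: Dist_D[OF \<mu>])
  also have "\<dots> = (SUP i. \<integral>\<^sup>+ x. cyl_weight \<kappa> L (U i) x \<partial>\<mu>)"
  proof (rule nn_integral_monotone_convergence_SUP_AE)
    have "incseq (\<lambda>i. cyl_weight \<kappa> L (U i) x)" if "x \<in> space M" for x
      using U(2) that by (cases L) (auto simp: incseq_def le_fun_def intro!: mult_left_mono kernel_chain_mono)
    then show "AE x in \<mu>. cyl_weight \<kappa> L (U i) x \<le> cyl_weight \<kappa> L (U (Suc i)) x" for i
      by (auto intro!: AE_I2 incseq_SucD simp: Dist_D[OF \<mu>])
  qed (use L U in \<open>simp add: measurable_cong_sets[OF Dist_D(2)[OF \<mu>] refl]\<close>)
  finally show ?thesis .
qed

lemma nn_integral_cyl_last_indicator: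
  assumes \<mu>: "\<mu> \<in> Dist M" and L: "L \<noteq> []" "set L \<subseteq> sets M" and C: "C \<in> sets M"
  shows "(\<integral>\<^sup>+ \<omega>. indicator (cyl M L) \<omega> * indicator C (\<omega> !! (length L - 1)) \<partial>P \<mu>) =
    (\<integral>\<^sup>+ x. cyl_weight \<kappa> L (indicator C) x \<partial>\<mu>)"
proof -
  have "(\<integral>\<^sup>+ \<omega>. indicator (cyl M L) \<omega> * indicator C (\<omega> !! (length L - 1)) \<partial>P \<mu>) =
      (\<integral>\<^sup>+ \<omega>. indicator (cyl M (restrict_last L C)) \<omega> \<partial>P \<mu>)"
    using L by (intro nn_integral_cong)
      (auto simp: cyl_restrict_last cyl_from_singleton path_measure[OF \<mu>] split: split_indicator)
  also have "\<dots> = emeasure (P \<mu>) (cyl M (restrict_last L C))"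
    using L C by (simp add: path_measure[OF \<mu>] sets_cyl set_restrict_last)
  also have "\<dots> = (\<integral>\<^sup>+ x. cyl_weight \<kappa> L (indicator C) x \<partial>\<mu>)"
    using L C cyl_weight_restrict_last[OF L(1), of \<kappa> C "\<lambda>_. 1"]
    by (simp add: emeasure_path_cyl[OF \<mu>] set_restrict_last)
  finally show ?thesis .
qed

lemma nn_integral_cyl_last:
  assumes \<mu>: "\<mu> \<in> Dist M" and L: "L \<noteq> []" "set L \<subseteq> sets M" and h: "h \<in> borel_measurable M"
  shows "(\<integral>\<^sup>+ \<omega>. indicator (cyl M L) \<omega> * h (\<omega> !! (length L - 1)) \<partial>P \<mu>) =
    (\<integral>\<^sup>+ x. cyl_weight \<kappa> L h x \<partial>\<mu>)"
  using h
proof (induction rule: borel_measurable_induct)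
  let ?lhs = "\<lambda>u. \<integral>\<^sup>+ \<omega>. indicator (cyl M L) \<omega> * u (\<omega> !! (length L - 1)) \<partial>P \<mu>"
  let ?rhs = "\<lambda>u. \<integral>\<^sup>+ x. cyl_weight \<kappa> L u x \<partial>\<mu>"
  have [measurable]: "cyl M L \<in> sets (stream_space M)"
    using L by (simp add: sets_cyl)
  have lhs_meas: "(\<lambda>\<omega>. indicator (cyl M L) \<omega> * u (\<omega> !! (length L - 1))) \<in> borel_measurable (P \<mu>)"
    if [measurable]: "u \<in> borel_measurable M" for u :: "'a \<Rightarrow> ennreal"
    unfolding measurable_cong_sets[OF path_measure(2)[OF \<mu>] refl] by measurable
  have rhs_meas: "cyl_weight \<kappa> L u \<in> borel_measurable \<mu>" if "u \<in> borel_measurable M" for u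
    unfolding measurable_cong_sets[OF Dist_D(2)[OF \<mu>] refl] using L(2) that by (rule measurable_cyl_weight)
  {
    case (cong f g)
    have "?lhs f = ?lhs g"
      using cong by (intro nn_integral_cong) (auto simp: path_measure[OF \<mu>] snth_in)
    moreover have "?rhs f = ?rhs g"
      using cong by (auto intro!: nn_integral_cong cyl_weight_cong simp: Dist_D[OF \<mu>])
    ultimately show ?case
      using cong by simp
  next
    case (set C)
    then show ?case
      by (rule nn_integral_cyl_last_indicator[OF \<mu> L])
  next
    case (mult u c)
    have "?lhs (\<lambda>x. c * u x) = c * ?lhs u"
      using lhs_meas[OF mult(2)] by (subst nn_integral_cmult[symmetric]) (auto simp: mult.left_commute)
    moreover have "?rhs (\<lambda>x. c * u x) = c * ?rhs u"
      using rhs_meas[OF mult(2)] mult(2) L(2)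
      by (subst nn_integral_cmult[symmetric]) (auto intro!: nn_integral_cong simp: cyl_weight_cmult Dist_D[OF \<mu>])
    ultimately show ?case
      using mult by simp
  next
    case (add u v)
    note meas = \<open>u \<in> borel_measurable M\<close> \<open>v \<in> borel_measurable M\<close>
    have "?lhs (\<lambda>x. v x + u x) = ?lhs v + ?lhs u"
      using lhs_meas[OF meas(1)] lhs_meas[OF meas(2)]
      by (subst nn_integral_add[symmetric]) (auto simp: distrib_left)
    moreover have "?rhs (\<lambda>x. v x + u x) = ?rhs v + ?rhs u"
      using rhs_meas[OF meas(1)] rhs_meas[OF meas(2)] meas L(2)
      by (subst nn_integral_add[symmetric]) (auto intro!: nn_integral_cong simp: cyl_weight_add Dist_D[OF \<mu>])
    ultimately show ?case
      using add by simp
  next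
    case (seq U)
    have "?lhs (SUP i. U i) = (SUP i. ?lhs (U i))"
      using seq lhs_meas
      by (simp add: SUP_mult_left_ennreal image_comp nn_integral_monotone_convergence_SUP
          incseq_def le_fun_def mult_left_mono)
    also have "\<dots> = (SUP i. ?rhs (U i))"
      using seq by simp
    also have "\<dots> = ?rhs (SUP i. U i)"
      using seq by (intro nn_integral_cyl_weight_SUP[OF \<mu> L(2), symmetric])
    finally show ?case .
  }
qed

lemma emeasure_cyl_Int_cyl_from:
  assumes \<mu>: "\<mu> \<in> Dist M" and L: "L \<noteq> []" "set L \<subseteq> sets M" and As: "As \<noteq> []" "set As \<subseteq> sets M"
  shows "emeasure (P \<mu>) (cyl M L \<inter> cyl_from M (length L - 1) As) =
    (\<integral>\<^sup>+ \<omega>. indicator (cyl M L) \<omega> * cyl_weight \<kappa> As (\<lambda>_. 1) (\<omega> !! (length L - 1)) \<partial>P \<mu>)"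
proof -
  obtain A As' where As_eq: "As = A # As'"
    using As(1) by (cases As) auto
  have sets: "set (restrict_last L A @ As') \<subseteq> sets M"
    using L As by (auto simp: As_eq dest: set_restrict_last[of L M A])
  have "emeasure (P \<mu>) (cyl M L \<inter> cyl_from M (length L - 1) As) =
      (\<integral>\<^sup>+ x. cyl_weight \<kappa> (restrict_last L A @ As') (\<lambda>_. 1) x \<partial>\<mu>)"
    using L(1) emeasure_path_cyl[OF \<mu> _ sets] by (simp add: As_eq cyl_restrict_last_append)
  also have "\<dots> = (\<integral>\<^sup>+ x. cyl_weight \<kappa> L (cyl_weight \<kappa> As (\<lambda>_. 1)) x \<partial>\<mu>)"
    using L(1) cyl_weight_restrict_last[OF L(1), of \<kappa> A "kernel_chain \<kappa> As' (\<lambda>_. 1)"]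
    by (simp add: As_eq cyl_weight_append cyl_weight.simps(2)[abs_def])
  also have "\<dots> = (\<integral>\<^sup>+ \<omega>. indicator (cyl M L) \<omega> * cyl_weight \<kappa> As (\<lambda>_. 1) (\<omega> !! (length L - 1)) \<partial>P \<mu>)"
    using L As by (intro nn_integral_cyl_last[OF \<mu>, symmetric]) auto
  finally show ?thesis .
qed

lemma emeasure_Int_cyl_from:
  assumes \<mu>: "\<mu> \<in> Dist M" and G: "G \<in> prefix_events M k" and As: "As \<noteq> []" "set As \<subseteq> sets M"
  shows "emeasure (P \<mu>) (G \<inter> cyl_from M k As) =
    (\<integral>\<^sup>+ \<omega>. indicator G \<omega> * cyl_weight \<kappa> As (\<lambda>_. 1) (\<omega> !! k) \<partial>P \<mu>)"
proof -
  interpret prob_space "P \<mu>"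
    using path_measure[OF \<mu>] by simp
  let ?f = "\<lambda>\<omega>. cyl_weight \<kappa> As (\<lambda>_. 1) (\<omega> !! k)"
  define N1 where "N1 = density (P \<mu>) (indicator (cyl_from M k As))"
  define N2 where "N2 = density (P \<mu>) ?f"
  have Z: "cyl_from M k As \<in> sets (P \<mu>)"
    using As by (simp add: path_measure[OF \<mu>] sets_cyl_from)
  have f: "?f \<in> borel_measurable (P \<mu>)"
    unfolding measurable_cong_sets[OF path_measure(2)[OF \<mu>] refl]
    by (intro measurable_compose[OF measurable_snth measurable_cyl_weight]) (use As in auto)
  have N1: "emeasure N1 X = emeasure (P \<mu>) (X \<inter> cyl_from M k As)" if "X \<in> sets (P \<mu>)" for X
    using that Z by (simp add: N1_def emeasure_restricted Int_commute)
  have N2: "emeasure N2 X = (\<integral>\<^sup>+ \<omega>. indicator X \<omega> * ?f \<omega> \<partial>P \<mu>)" if "X \<in> sets (P \<mu>)" for X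
    using that f by (simp add: N2_def emeasure_density mult.commute)
  have prefix_sets: "prefix_events M k \<subseteq> sets (P \<mu>)"
    using prefix_events_subset_sets by (simp add: path_measure[OF \<mu>])
  have eq: "emeasure N1 X = emeasure N2 X" if X: "X \<in> prefix_cyls M k" for X
  proof -
    obtain L where L: "X = cyl M L" "length L = Suc k" "set L \<subseteq> sets M"
      using X by (auto simp: prefix_cyls_def)
    moreover have "L \<noteq> []"
      using L(2) by auto
    ultimately show ?thesis
      using emeasure_cyl_Int_cyl_from[OF \<mu> _ L(3) As] prefix_sets
      by (auto simp: N1 N2 sets_cyl path_measure[OF \<mu>])
  qed
  have "emeasure N1 (streams (space M)) \<noteq> \<infinity>"
    using N1[of "streams (space M)"] emeasure_finite by (simp add: path_measure[OF \<mu>] streams_stream_space)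
  then have "finite_measure N1" "finite_measure N2"
    using eq[OF streams_in_prefix_cyls]
    by (auto intro!: finite_measureI simp: N1_def N2_def path_measure[OF \<mu>])
  moreover have "sigma_sets (streams (space M)) (prefix_cyls M k) \<subseteq> sets N1"
    "sigma_sets (streams (space M)) (prefix_cyls M k) \<subseteq> sets N2"
    using prefix_sets by (simp_all add: N1_def N2_def prefix_events_def)
  ultimately have "emeasure N1 G = emeasure N2 G"
    using G unfolding prefix_events_def
    by (intro emeasure_eq_on_sigma_sets[OF Int_stable_prefix_cyls prefix_cyls_subset_Pow
          streams_in_prefix_cyls _ _ _ _ eq])
  then show ?thesis
    using G prefix_sets by (simp add: N1 N2 subset_eq)
qed

lemma measurable_uniform_path_measure:
  "\<mu> \<in> Dist M \<Longrightarrow> uniform_measure (P \<mu>) G \<rightarrow>\<^sub>M N = stream_space M \<rightarrow>\<^sub>M N"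
  by (rule measurable_cong_sets) (simp_all add: path_measure(2))

definition cond_state :: "'a measure \<Rightarrow> 'a stream set \<Rightarrow> nat \<Rightarrow> 'a measure" where
  "cond_state \<mu> G k = distr (uniform_measure (P \<mu>) G) M (\<lambda>\<omega>. \<omega> !! k)"

lemma sets_cond_state[simp]: "sets (cond_state \<mu> G k) = sets M"
  by (simp add: cond_state_def)

lemma space_cond_state[simp]: "space (cond_state \<mu> G k) = space M"
  by (simp add: cond_state_def)

lemma
  assumes \<mu>: "\<mu> \<in> Dist M" and G: "G \<in> sets (stream_space M)" and pos: "measure (P \<mu>) G > 0"
  shows cond_state_in_Dist: "cond_state \<mu> G k \<in> Dist M"
    and measure_cond_state: "C \<in> sets M \<Longrightarrow>
      measure (cond_state \<mu> G k) C = measure (P \<mu>) (G \<inter> cyl_from M k [C]) / measure (P \<mu>) G"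
proof -
  interpret prob_space "P \<mu>"
    using path_measure[OF \<mu>] by simp
  have G': "emeasure (P \<mu>) G \<noteq> 0" "emeasure (P \<mu>) G \<noteq> \<infinity>"
    using pos by (auto simp: emeasure_eq_measure)
  have snth: "(\<lambda>\<omega>. \<omega> !! k) \<in> uniform_measure (P \<mu>) G \<rightarrow>\<^sub>M M"
    unfolding measurable_uniform_path_measure[OF \<mu>] by simp
  show "cond_state \<mu> G k \<in> Dist M"
    unfolding cond_state_def Dist_def
    using prob_space.prob_space_distr[OF prob_space_uniform_measure[OF G'] snth] by simp
  show "measure (cond_state \<mu> G k) C = measure (P \<mu>) (G \<inter> cyl_from M k [C]) / measure (P \<mu>) G"
    if C: "C \<in> sets M"
  proof -
    have "(\<lambda>\<omega>. \<omega> !! k) -` C \<inter> streams (space M) = cyl_from M k [C]"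
      by (auto simp: cyl_from_singleton)
    moreover have "cyl_from M k [C] \<in> sets (P \<mu>)"
      using C by (simp add: sets_cyl_from path_measure[OF \<mu>])
    ultimately show ?thesis
      unfolding cond_state_def using C G' snth
      by (simp add: measure_distr path_measure[OF \<mu>])
  qed
qed

theorem markov_property:
  assumes \<mu>: "\<mu> \<in> Dist M" and G: "G \<in> prefix_events M k" and pos: "measure (P \<mu>) G > 0"
  shows "P (cond_state \<mu> G k) = distr (uniform_measure (P \<mu>) G) (stream_space M) (sdrop k)"
proof -
  interpret prob_space "P \<mu>"
    using path_measure[OF \<mu>] by simp
  let ?U = "uniform_measure (P \<mu>) G"
  have G_sets: "G \<in> sets (P \<mu>)"
    using G prefix_events_subset_sets by (auto simp: path_measure[OF \<mu>])
  have G': "emeasure (P \<mu>) G \<noteq> 0" "emeasure (P \<mu>) G \<noteq> \<infinity>"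
    using pos by (auto simp: emeasure_eq_measure)
  have sdrop: "sdrop k \<in> ?U \<rightarrow>\<^sub>M stream_space M"
    unfolding measurable_uniform_path_measure[OF \<mu>] by simp
  have "is_path_measure M \<kappa> (cond_state \<mu> G k) (distr ?U (stream_space M) (sdrop k))"
    unfolding is_path_measure_def
  proof (intro conjI allI impI)
    show "prob_space (distr ?U (stream_space M) (sdrop k))"
      by (rule prob_space.prob_space_distr[OF prob_space_uniform_measure[OF G'] sdrop])
    fix As :: "'a set list" assume As: "As \<noteq> []" "set As \<subseteq> sets M"
    let ?f = "cyl_weight \<kappa> As (\<lambda>_. 1)"
    have f: "?f \<in> borel_measurable M"
      using As(2) by simp
    have "emeasure (distr ?U (stream_space M) (sdrop k)) (cyl M As) =
        emeasure (P \<mu>) (G \<inter> cyl_from M k As) / emeasure (P \<mu>) G"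
      using sdrop sets_cyl[OF As(2)] G_sets sets_cyl_from[OF As(2)]
      by (simp add: emeasure_distr path_measure[OF \<mu>] vimage_sdrop_cyl)
    also have "\<dots> = (\<integral>\<^sup>+ \<omega>. ?f (\<omega> !! k) \<partial>?U)"
      using G_sets f
      by (simp add: emeasure_Int_cyl_from[OF \<mu> G As] nn_integral_uniform_measure mult.commute
          measurable_cong_sets[OF path_measure(2)[OF \<mu>] refl])
    also have "\<dots> = cyl_prob \<kappa> (cond_state \<mu> G k) As"
      using sdrop f As(1) unfolding cond_state_def
      by (simp add: nn_integral_distr cyl_prob_eq_cyl_weight
          measurable_uniform_path_measure[OF \<mu>])
    finally show "emeasure (distr ?U (stream_space M) (sdrop k)) (cyl M As) =
        cyl_prob \<kappa> (cond_state \<mu> G k) As" .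
  qed simp
  then show ?thesis
    using path cond_state_in_Dist[OF \<mu> _ pos] G_sets
    by (auto intro: is_path_measure_unique simp: path_measure[OF \<mu>])
qed

lemma measure_path_cond_state:
  assumes \<mu>: "\<mu> \<in> Dist M" and G: "G \<in> prefix_events M k" and pos: "measure (P \<mu>) G > 0"
    and Z: "Z \<in> sets (stream_space M)"
  shows "measure (P (cond_state \<mu> G k)) Z =
    measure (P \<mu>) (G \<inter> (sdrop k -` Z \<inter> streams (space M))) / measure (P \<mu>) G"
proof -
  interpret prob_space "P \<mu>"
    using path_measure[OF \<mu>] by simp
  have "G \<in> sets (P \<mu>)"
    using G prefix_events_subset_sets by (auto simp: path_measure[OF \<mu>])
  moreover have "emeasure (P \<mu>) G \<noteq> 0"
    using pos by (simp add: emeasure_eq_measure)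
  moreover have "sdrop k -` Z \<inter> streams (space M) \<in> sets (P \<mu>)"
    using measurable_sets[OF measurable_sdrop Z]
    by (simp add: path_measure[OF \<mu>] space_stream_space)
  ultimately show ?thesis
    using Z by (simp add: markov_property[OF assms(1-3)] measure_distr path_measure[OF \<mu>]
        measurable_uniform_path_measure[OF \<mu>])
qed

lemma cond_seq_eq_cond_state:
  assumes \<nu>: "\<nu> \<in> Dist M" and L: "L \<noteq> []" "set L \<subseteq> sets M"
  shows "cond_seq M P \<nu> L = cond_state \<nu> (cyl M L) (length L - 1)"
  unfolding cond_seq_def
proof (rule measure_of_eq_measure)
  show "sets (cond_state \<nu> (cyl M L) (length L - 1)) = sets M"
    by simp
  fix C assume C: "C \<in> sets M"
  have snth: "(\<lambda>\<omega>. \<omega> !! (length L - 1)) \<in> uniform_measure (P \<nu>) (cyl M L) \<rightarrow>\<^sub>M M"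
    unfolding measurable_uniform_path_measure[OF \<nu>] by simp
  have vimage: "(\<lambda>\<omega>. \<omega> !! (length L - 1)) -` C \<inter> space (P \<nu>) =
      cyl_from M (length L - 1) [C]"
    by (auto simp: path_measure[OF \<nu>] cyl_from_singleton)
  have "cyl M L \<in> sets (P \<nu>)" "cyl_from M (length L - 1) [C] \<in> sets (P \<nu>)"
    using L C by (simp_all add: path_measure[OF \<nu>] sets_cyl sets_cyl_from)
  then have "emeasure (cond_state \<nu> (cyl M L) (length L - 1)) C =
      emeasure (P \<nu>) (cyl M L \<inter> cyl_from M (length L - 1) [C]) / emeasure (P \<nu>) (cyl M L)"
    unfolding cond_state_def using C snth by (simp add: emeasure_distr vimage[simplified])
  then show "emeasure (P \<nu>) (cyl M (butlast L @ [last L \<inter> C])) / emeasure (P \<nu>) (cyl M L) =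
      emeasure (cond_state \<nu> (cyl M L) (length L - 1)) C"
    using L by (simp add: restrict_last_eq[symmetric] cyl_restrict_last)
qed

lemma cond_state_cond_state:
  assumes \<mu>: "\<mu> \<in> Dist M" and G: "G \<in> prefix_events M k" and pos: "measure (P \<mu>) G > 0"
    and Z: "Z \<in> sets (stream_space M)"
    and pos': "measure (P \<mu>) (G \<inter> (sdrop k -` Z \<inter> streams (space M))) > 0"
  shows "cond_state (cond_state \<mu> G k) Z n =
    cond_state \<mu> (G \<inter> (sdrop k -` Z \<inter> streams (space M))) (k + n)"
proof -
  define G' where "G' = G \<inter> (sdrop k -` Z \<inter> streams (space M))"
  have G_sets: "G \<in> sets (stream_space M)"
    using G prefix_events_subset_sets by auto
  have G'_sets: "G' \<in> sets (stream_space M)"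
    using G_sets measurable_sets[OF measurable_sdrop Z] by (auto simp: G'_def space_stream_space)
  have \<nu>: "cond_state \<mu> G k \<in> Dist M"
    using cond_state_in_Dist[OF \<mu> G_sets pos] .
  have vimage: "sdrop k -` (Z \<inter> cyl_from M n [C]) \<inter> streams (space M) =
      (sdrop k -` Z \<inter> streams (space M)) \<inter> cyl_from M (k + n) [C]" for C
    using vimage_sdrop_cyl_from[of k M n "[C]"] by auto
  have Z_pos: "measure (P (cond_state \<mu> G k)) Z > 0"
    using pos pos' by (simp add: measure_path_cond_state[OF \<mu> G pos Z])
  show ?thesis
    unfolding G'_def[symmetric]
  proof (rule prob_space_eqI_measure)
    show "prob_space (cond_state (cond_state \<mu> G k) Z n)"
      using Dist_D(1)[OF cond_state_in_Dist[OF \<nu> Z Z_pos]] .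
    show "prob_space (cond_state \<mu> G' (k + n))"
      using Dist_D(1)[OF cond_state_in_Dist[OF \<mu> G'_sets pos'[folded G'_def]]] .
    fix C assume "C \<in> sets (cond_state (cond_state \<mu> G k) Z n)"
    then have C: "C \<in> sets M"
      by simp
    then have "Z \<inter> cyl_from M n [C] \<in> sets (stream_space M)"
      using Z by (intro sets.Int) (simp_all add: sets_cyl_from)
    moreover have "G \<inter> (sdrop k -` (Z \<inter> cyl_from M n [C]) \<inter> streams (space M)) =
        G' \<inter> cyl_from M (k + n) [C]"
      using vimage by (auto simp: G'_def)
    ultimately have "measure (P (cond_state \<mu> G k)) (Z \<inter> cyl_from M n [C]) =
        measure (P \<mu>) (G' \<inter> cyl_from M (k + n) [C]) / measure (P \<mu>) G"
      by (simp only: measure_path_cond_state[OF \<mu> G pos])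
    moreover have "measure (P (cond_state \<mu> G k)) Z = measure (P \<mu>) G' / measure (P \<mu>) G"
      by (simp add: measure_path_cond_state[OF \<mu> G pos Z] G'_def)
    ultimately show "measure (cond_state (cond_state \<mu> G k) Z n) C = measure (cond_state \<mu> G' (k + n)) C"
      using pos pos'[folded G'_def]
      by (simp add: measure_cond_state[OF \<nu> Z Z_pos C] measure_cond_state[OF \<mu> G'_sets _ C])
  qed simp
qed

lemma uniform_measure_cond_state:
  assumes \<mu>: "\<mu> \<in> Dist M" and G: "G \<in> sets (stream_space M)" and C: "C \<in> sets M"
    and pos: "measure (P \<mu>) (G \<inter> cyl_from M k [C]) > 0"
  shows "uniform_measure (cond_state \<mu> G k) C = cond_state \<mu> (G \<inter> cyl_from M k [C]) k"
proof -
  interpret prob_space "P \<mu>"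
    using path_measure[OF \<mu>] by simp
  have GC: "G \<inter> cyl_from M k [C] \<in> sets (stream_space M)"
    using G C by (intro sets.Int) (simp_all add: sets_cyl_from)
  have G_pos: "measure (P \<mu>) G > 0"
    using pos finite_measure_mono[of "G \<inter> cyl_from M k [C]" G] G by (simp add: path_measure[OF \<mu>])
  interpret cond: prob_space "cond_state \<mu> G k"
    using Dist_D(1)[OF cond_state_in_Dist[OF \<mu> G G_pos]] .
  have C_pos: "measure (cond_state \<mu> G k) C > 0"
    using pos G_pos by (simp add: measure_cond_state[OF \<mu> G G_pos C])
  have cyl_Int: "cyl_from M k [C \<inter> A] = cyl_from M k [C] \<inter> cyl_from M k [A]" for A
    by (auto simp: cyl_from_singleton)
  show ?thesis
  proof (rule prob_space_eqI_measure)
    show "prob_space (uniform_measure (cond_state \<mu> G k) C)"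
      using C_pos by (intro prob_space_uniform_measure) (simp_all add: cond.emeasure_eq_measure)
    show "prob_space (cond_state \<mu> (G \<inter> cyl_from M k [C]) k)"
      using Dist_D(1)[OF cond_state_in_Dist[OF \<mu> GC pos]] .
    fix A assume "A \<in> sets (uniform_measure (cond_state \<mu> G k) C)"
    then have A: "A \<in> sets M"
      by simp
    have "measure (uniform_measure (cond_state \<mu> G k) C) A =
        measure (cond_state \<mu> G k) (C \<inter> A) / measure (cond_state \<mu> G k) C"
      using C_pos C A by (intro measure_uniform_measure) (simp_all add: cond.emeasure_eq_measure)
    then show "measure (uniform_measure (cond_state \<mu> G k) C) A =
        measure (cond_state \<mu> (G \<inter> cyl_from M k [C]) k) A"
      using C_pos G_pos C A
      by (simp add: measure_cond_state[OF \<mu> G G_pos]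
          measure_cond_state[OF \<mu> GC pos] cyl_Int Int_assoc)
  qed simp
qed

lemma cond_seq_cond_state:
  assumes \<mu>: "\<mu> \<in> Dist M" and G: "G \<in> prefix_events M k" and L: "L \<noteq> []" "set L \<subseteq> sets M"
    and pos: "measure (P \<mu>) (G \<inter> cyl_from M k L) > 0"
  shows "measure (P (cond_state \<mu> G k)) (cyl M L) > 0"
    and "cond_seq M P (cond_state \<mu> G k) L = cond_state \<mu> (G \<inter> cyl_from M k L) (k + (length L - 1))"
proof -
  interpret prob_space "P \<mu>"
    using path_measure[OF \<mu>] by simp
  have G_sets: "G \<in> sets (stream_space M)"
    using G prefix_events_subset_sets by auto
  have G_pos: "measure (P \<mu>) G > 0"
    using pos finite_measure_mono[of "G \<inter> cyl_from M k L" G] G_sets by (simp add: path_measure[OF \<mu>])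
  have cyl: "cyl M L \<in> sets (stream_space M)"
    using L(2) by (rule sets_cyl)
  show "measure (P (cond_state \<mu> G k)) (cyl M L) > 0"
    using pos G_pos by (simp add: measure_path_cond_state[OF \<mu> G G_pos cyl] vimage_sdrop_cyl)
  then show "cond_seq M P (cond_state \<mu> G k) L = cond_state \<mu> (G \<inter> cyl_from M k L) (k + (length L - 1))"
    using pos by (simp add: cond_seq_eq_cond_state[OF cond_state_in_Dist[OF \<mu> G_sets G_pos] L]
        cond_state_cond_state[OF \<mu> G G_pos cyl] vimage_sdrop_cyl)
qed

lemma cond_set_cond_seq_cond_state:
  assumes \<mu>: "\<mu> \<in> Dist M" and G: "G \<in> prefix_events M k" and L: "L \<noteq> []" "set L \<subseteq> sets M"
    and T: "T \<in> sets M"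
    and pos: "measure (P \<mu>) (G \<inter> cyl_from M k L \<inter> cyl_from M (k + (length L - 1)) [space M - T]) > 0"
  shows "cond_state \<mu> G k \<in> Dist M" "measure (P (cond_state \<mu> G k)) (cyl M L) > 0"
    "measure (cond_seq M P (cond_state \<mu> G k) L) T < 1"
    "cond_set M (cond_seq M P (cond_state \<mu> G k) L) (space M - T) = cond_state \<mu>
      (G \<inter> cyl_from M k L \<inter> cyl_from M (k + (length L - 1)) [space M - T]) (k + (length L - 1))"
proof -
  interpret prob_space "P \<mu>"
    using path_measure[OF \<mu>] by simp
  define K where "K = k + (length L - 1)"
  define D where "D = G \<inter> cyl_from M k L"
  have G_sets: "G \<in> sets (stream_space M)"
    using G prefix_events_subset_sets by auto
  have D_sets: "D \<in> sets (stream_space M)"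
    using G_sets L by (auto simp: D_def sets_cyl_from)
  have "measure (P \<mu>) (D \<inter> cyl_from M K [space M - T]) \<le> measure (P \<mu>) D"
    using D_sets by (intro finite_measure_mono) (auto simp: path_measure[OF \<mu>])
  then have D_pos: "measure (P \<mu>) D > 0"
    using pos by (simp add: D_def K_def)
  have "measure (P \<mu>) D \<le> measure (P \<mu>) G"
    using G_sets by (intro finite_measure_mono) (auto simp: D_def path_measure[OF \<mu>])
  then show \<nu>: "cond_state \<mu> G k \<in> Dist M"
    using D_pos by (intro cond_state_in_Dist[OF \<mu> G_sets]) simp
  note seq = cond_seq_cond_state[OF \<mu> G L D_pos[unfolded D_def], folded D_def K_def]
  show "measure (P (cond_state \<mu> G k)) (cyl M L) > 0"
    by (rule seq(1))
  interpret cond: prob_space "cond_state \<mu> D K"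
    using Dist_D(1)[OF cond_state_in_Dist[OF \<mu> D_sets D_pos]] .
  have "measure (cond_state \<mu> D K) (space M - T) =
      measure (P \<mu>) (D \<inter> cyl_from M K [space M - T]) / measure (P \<mu>) D"
    using T by (intro measure_cond_state[OF \<mu> D_sets D_pos]) auto
  then have "measure (cond_state \<mu> D K) (space M - T) > 0"
    using pos D_pos by (simp add: D_def K_def)
  then show "measure (cond_seq M P (cond_state \<mu> G k) L) T < 1"
    using cond.prob_compl[of T] T seq(2) by simp
  have "uniform_measure (cond_state \<mu> D K) (space M - T) = cond_state \<mu> (D \<inter> cyl_from M K [space M - T]) K"
    using T pos by (intro uniform_measure_cond_state[OF \<mu> D_sets]) (auto simp: D_def K_def)
  then show "cond_set M (cond_seq M P (cond_state \<mu> G k) L) (space M - T) =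
      cond_state \<mu> (G \<inter> cyl_from M k L \<inter> cyl_from M (k + (length L - 1)) [space M - T]) (k + (length L - 1))"
    unfolding K_def[symmetric] D_def[symmetric] using seq(2) T by (simp add: cond_set_eq_uniform_measure)
qed

lemma measure_avoiding_cyl_from_le:
  assumes \<mu>: "\<mu> \<in> Dist M" and G: "G \<in> prefix_events M k" and L: "L \<noteq> []" "set L \<subseteq> sets M"
    and B: "B \<in> sets M" and T: "T \<in> sets M" and p: "p \<le> 1"
    and escape: "\<And>\<nu>. \<nu> \<in> Dist M \<Longrightarrow> measure (P \<nu>) (cyl M L) > 0 \<Longrightarrow>
      measure (cond_seq M P \<nu> L) T < 1 \<Longrightarrow>
      p \<le> measure (P (cond_set M (cond_seq M P \<nu> L) (space M - T))) (Ev M B)"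
  shows "measure (P \<mu>) (avoiding M (B \<union> T) \<inter> (G \<inter> cyl_from M k L)) \<le>
    (1 - p) * measure (P \<mu>) (G \<inter> cyl_from M k L)"
proof -
  interpret prob_space "P \<mu>"
    using path_measure[OF \<mu>] by simp
  define K where "K = k + (length L - 1)"
  define D where "D = G \<inter> cyl_from M k L"
  define D' where "D' = D \<inter> cyl_from M K [space M - T]"
  define hit where "hit = sdrop K -` Ev M B \<inter> streams (space M)"
  interpret prefix: sigma_algebra "streams (space M)" "prefix_events M K"
    by (rule sigma_algebra_prefix_events)
  have "G \<in> prefix_events M K"
    using G prefix_events_mono[of k K M] by (auto simp: K_def)
  moreover have "cyl_from M k L \<in> prefix_events M K" "cyl_from M K [space M - T] \<in> prefix_events M K"
    using L T by (auto simp: K_def intro!: cyl_from_in_prefix_events)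
  ultimately have "D \<in> prefix_events M K" "D' \<in> prefix_events M K"
    by (auto simp: D_def D'_def)
  then have D': "D' \<in> prefix_events M K" "D' \<in> events" and "D \<in> events"
    using prefix_events_subset_sets by (auto simp: path_measure[OF \<mu>])
  have hit: "hit \<in> events"
    using measurable_sets[OF measurable_sdrop sets_Ev[OF B]]
    by (simp add: hit_def path_measure[OF \<mu>] space_stream_space)
  have avoid: "avoiding M (B \<union> T) \<inter> D \<subseteq> D' - hit"
    by (auto simp: avoiding_def D'_def hit_def Ev_def cyl_from_singleton D_def snth_in sdrop_snth)
  have "prob D' \<le> prob D"
    using \<open>D \<in> events\<close> by (intro finite_measure_mono) (auto simp: D'_def)
  then have "(1 - p) * prob D' \<le> (1 - p) * prob D"
    using p by (intro mult_left_mono) auto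
  moreover have "p * prob D' \<le> prob (D' \<inter> hit)"
  proof (cases "prob D' = 0")
    case False
    then have D'_pos: "prob D' > 0"
      by (simp add: zero_less_measure_iff)
    note cond = cond_set_cond_seq_cond_state[OF \<mu> G L T D'_pos[unfolded D'_def D_def K_def],
        folded K_def D_def, folded D'_def]
    have "p \<le> prob (D' \<inter> hit) / prob D'"
      using escape[OF cond(1-3)] cond(4) measure_path_cond_state[OF \<mu> D'(1) D'_pos sets_Ev[OF B]]
      by (simp add: hit_def)
    then show ?thesis
      using D'_pos by (simp add: le_divide_eq)
  qed simp
  moreover have "prob (avoiding M (B \<union> T) \<inter> D) \<le> prob D' - prob (D' \<inter> hit)"
    using finite_measure_mono[OF avoid] finite_measure_Diff'[OF D'(2) hit] D'(2) hit by auto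
  ultimately show ?thesis
    unfolding D_def by (simp add: left_diff_distrib)
qed

lemma decisiveI_AE:
  assumes B: "B \<in> sets M" "Btilde M P B \<in> sets M"
    and AE: "\<And>\<mu>. \<mu> \<in> Dist M \<Longrightarrow> AE \<omega> in P \<mu>. \<omega> \<notin> avoiding M (B \<union> Btilde M P B)"
  shows "decisive M P B"
  unfolding decisive_def
proof
  fix \<mu> assume \<mu>: "\<mu> \<in> Dist M"
  interpret prob_space "P \<mu>"
    using path_measure[OF \<mu>] by simp
  have avoid: "avoiding M (B \<union> Btilde M P B) \<in> events"
    using B by (simp add: sets_avoiding path_measure[OF \<mu>])
  have "Ev M B \<union> Ev M (Btilde M P B) = space (P \<mu>) - avoiding M (B \<union> Btilde M P B)"
    by (auto simp: Ev_def avoiding_def path_measure[OF \<mu>])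
  then show "prob (Ev M B \<union> Ev M (Btilde M P B)) = 1"
    using prob_compl[OF avoid] prob_eq_0[OF avoid] AE[OF \<mu>] by simp
qed

end

section \<open>Avoiding runs visit recurrent windows with probability zero\<close>

lemma INFM_residue:
  fixes n :: nat
  assumes "n > 0" "\<exists>\<^sub>\<infinity>k. Q k"
  shows "\<exists>r<n. \<exists>\<^sub>\<infinity>i. Q (r + i * n)"
proof (rule ccontr)
  assume "\<not> ?thesis"
  then have "finite (\<Union>r<n. (\<lambda>i. r + i * n) ` {i. Q (r + i * n)})"
    by (auto simp: INFM_iff_infinite)
  moreover have "{k. Q k} \<subseteq> (\<Union>r<n. (\<lambda>i. r + i * n) ` {i. Q (r + i * n)})"
  proof
    fix k assume "k \<in> {k. Q k}"
    then show "k \<in> (\<Union>r<n. (\<lambda>i. r + i * n) ` {i. Q (r + i * n)})"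
      using assms(1) by (intro UN_I[of "k mod n"] image_eqI[of _ _ "k div n"]) auto
  qed
  ultimately show False
    using assms(2) by (auto simp: INFM_iff_infinite dest: finite_subset)
qed

definition window_entries :: "'a measure \<Rightarrow> 'a set \<Rightarrow> 'a set list \<Rightarrow> (nat \<Rightarrow> nat) \<Rightarrow> nat \<Rightarrow> 'a stream set" where
  "window_entries M Z L t N = (\<Union>k. avoiding_upto M (t (N + k)) Z \<inter> cyl_from M (t (N + k)) L)"

lemma decseq_window_entries: "decseq (window_entries M Z L t)"
proof (rule decseq_SucI)
  fix N
  show "window_entries M Z L t (Suc N) \<subseteq> window_entries M Z L t N"
  proof
    fix \<omega> assume "\<omega> \<in> window_entries M Z L t (Suc N)"
    then obtain k where "\<omega> \<in> avoiding_upto M (t (N + Suc k)) Z \<inter> cyl_from M (t (N + Suc k)) L"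
      by (auto simp: window_entries_def)
    then show "\<omega> \<in> window_entries M Z L t N"
      unfolding window_entries_def by blast
  qed
qed

lemma avoiding_INFM_subset_window_entries:
  "avoiding M Z \<inter> {\<omega>. \<exists>\<^sub>\<infinity>i. \<omega> \<in> cyl_from M (t i) L} \<subseteq> window_entries M Z L t N"
proof
  fix \<omega> assume \<omega>: "\<omega> \<in> avoiding M Z \<inter> {\<omega>. \<exists>\<^sub>\<infinity>i. \<omega> \<in> cyl_from M (t i) L}"
  then obtain n where "n \<ge> N" "\<omega> \<in> cyl_from M (t n) L"
    by (auto simp: INFM_nat_le)
  then have "\<omega> \<in> avoiding_upto M (t (N + (n - N))) Z \<inter> cyl_from M (t (N + (n - N))) L"
    using \<omega> by (auto simp: avoiding_def avoiding_upto_def)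
  then show "\<omega> \<in> window_entries M Z L t N"
    unfolding window_entries_def by blast
qed

lemma INT_window_entries_subset:
  assumes t: "\<And>i. i \<le> t i"
  shows "(\<Inter>N. window_entries M Z L t N) \<subseteq> avoiding M Z \<inter> {\<omega>. \<exists>\<^sub>\<infinity>i. \<omega> \<in> cyl_from M (t i) L}"
proof
  fix \<omega> assume "\<omega> \<in> (\<Inter>N. window_entries M Z L t N)"
  then have hit: "\<exists>k. \<omega> \<in> avoiding_upto M (t (N + k)) Z \<inter> cyl_from M (t (N + k)) L" for N
    by (auto simp: window_entries_def)
  have "\<omega> !! s \<notin> Z" for s
  proof -
    obtain k where "\<omega> \<in> avoiding_upto M (t (Suc s + k)) Z"
      using hit by blast
    moreover have "s < t (Suc s + k)"
      using t[of "Suc s + k"] by simp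
    ultimately show ?thesis
      by (auto simp: avoiding_upto_def)
  qed
  moreover have "\<exists>n\<ge>m. \<omega> \<in> cyl_from M (t n) L" for m
    using hit[of m] le_add1 by blast
  ultimately show "\<omega> \<in> avoiding M Z \<inter> {\<omega>. \<exists>\<^sub>\<infinity>i. \<omega> \<in> cyl_from M (t i) L}"
    using hit[of 0] by (auto simp: avoiding_def avoiding_upto_def INFM_nat_le)
qed

lemma measure_avoiding_window_entries_le:
  assumes Q: "prob_space Q" "sets Q = sets (stream_space M)" and Z: "Z \<in> sets M" and L: "set L \<subseteq> sets M"
    and t: "\<And>i j. i < j \<Longrightarrow> t i + length L \<le> t j"
    and bound: "\<And>k G. G \<in> prefix_events M k \<Longrightarrow>
      measure Q (avoiding M Z \<inter> (G \<inter> cyl_from M k L)) \<le> c * measure Q (G \<inter> cyl_from M k L)"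
  shows "window_entries M Z L t N \<in> sets Q"
    and "measure Q (avoiding M Z \<inter> window_entries M Z L t N) \<le> c * measure Q (window_entries M Z L t N)"
proof -
  interpret prob_space Q by fact
  define S where "S i = avoiding_upto M (t i) Z \<inter> cyl_from M (t i) L" for i
  have S_prefix: "S i \<in> prefix_events M (t j)" if "i < j" for i j
  proof -
    interpret sigma_algebra "streams (space M)" "prefix_events M (t j)"
      by (rule sigma_algebra_prefix_events)
    have "avoiding_upto M (t i) Z \<in> prefix_events M (t j)"
      using prefix_events_mono[of "t i" "t j" M] avoiding_upto_in_prefix_events[OF Z] t[OF that] by auto
    moreover have "cyl_from M (t i) L \<in> prefix_events M (t j)"
      using L t[OF that] by (intro cyl_from_in_prefix_events) auto
    ultimately show ?thesis
      unfolding S_def by (rule Int)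
  qed
  have S_sets: "S i \<in> sets Q" for i
    using S_prefix[OF lessI] prefix_events_subset_sets Q(2) by auto
  then show "window_entries M Z L t N \<in> sets Q"
    by (auto simp: window_entries_def S_def[symmetric])
  show "measure Q (avoiding M Z \<inter> window_entries M Z L t N) \<le> c * measure Q (window_entries M Z L t N)"
    unfolding window_entries_def S_def[symmetric]
  proof (rule measure_Int_UN_le)
    fix k
    txt \<open>Windows entered before time \<open>t (N + k)\<close> are over by then, so the \<open>k\<close>-th piece of the
      first-entrance decomposition is an event of time \<open>t (N + k)\<close> followed by a window.\<close>
    define G where "G = avoiding_upto M (t (N + k)) Z - (\<Union>i\<in>{0..<k}. S (N + i))"
    interpret sigma_algebra "streams (space M)" "prefix_events M (t (N + k))"
      by (rule sigma_algebra_prefix_events)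
    have "G \<in> prefix_events M (t (N + k))"
      unfolding G_def using avoiding_upto_in_prefix_events[OF Z] S_prefix by (intro Diff finite_UN) auto
    moreover have "disjointed (\<lambda>k. S (N + k)) k = G \<inter> cyl_from M (t (N + k)) L"
      by (auto simp: disjointed_def G_def S_def)
    ultimately show "measure Q (avoiding M Z \<inter> disjointed (\<lambda>k. S (N + k)) k) \<le>
        c * measure Q (disjointed (\<lambda>k. S (N + k)) k)"
      using bound by simp
  qed (use sets_avoiding[OF Z] S_sets Q(2) in auto)
qed

lemma avoiding_lattice_recurrent_null:
  assumes Q: "prob_space Q" "sets Q = sets (stream_space M)" and Z: "Z \<in> sets M"
    and L: "L \<noteq> []" "set L \<subseteq> sets M" and q: "0 < q" "q \<le> 1"
    and bound: "\<And>k G. G \<in> prefix_events M k \<Longrightarrow>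
      measure Q (avoiding M Z \<inter> (G \<inter> cyl_from M k L)) \<le> (1 - q) * measure Q (G \<inter> cyl_from M k L)"
  shows "avoiding M Z \<inter> {\<omega>. \<exists>\<^sub>\<infinity>i. \<omega> \<in> cyl_from M (r + i * length L) L} \<in> null_sets Q"
proof -
  interpret prob_space Q by fact
  define t where "t i = r + i * length L" for i
  define R where "R = avoiding M Z \<inter> {\<omega>. \<exists>\<^sub>\<infinity>i. \<omega> \<in> cyl_from M (t i) L}"
  have t_le: "t i + length L \<le> t j" if "i < j" for i j
  proof -
    have "Suc i * length L \<le> j * length L"
      using that by (intro mult_right_mono) auto
    then show ?thesis
      by (simp add: t_def)
  qed
  have t_ge: "i \<le> t i" for i
    using L(1) by (cases L) (simp_all add: t_def)
  note entries = measure_avoiding_window_entries_le[where t=t, OF Q Z L(2) t_le bound]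
  have [measurable]: "cyl_from M (t i) L \<in> sets (stream_space M)" for i
    using L(2) by (rule sets_cyl_from)
  have "{\<omega> \<in> space (stream_space M). \<forall>m. \<exists>n\<ge>m. \<omega> \<in> cyl_from M (t n) L} \<in> sets (stream_space M)"
    by measurable
  moreover have "R = avoiding M Z \<inter> {\<omega> \<in> space (stream_space M). \<forall>m. \<exists>n\<ge>m. \<omega> \<in> cyl_from M (t n) L}"
    by (auto simp: R_def INFM_nat_le space_stream_space avoiding_def)
  ultimately have R_sets: "R \<in> sets Q"
    using sets_avoiding[OF Z] Q(2) by simp
  have "measure Q R \<le> (1 - q) * measure Q (window_entries M Z L t N)" for N
  proof -
    have "measure Q R \<le> measure Q (avoiding M Z \<inter> window_entries M Z L t N)"
      using avoiding_INFM_subset_window_entries[where t=t and N=N] sets_avoiding[OF Z] entries(1) Q(2)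
      by (intro finite_measure_mono) (auto simp: R_def)
    then show ?thesis
      using entries(2)[of N] by simp
  qed
  moreover have "(\<Inter>N. window_entries M Z L t N) \<subseteq> R"
    unfolding R_def by (rule INT_window_entries_subset[OF t_ge])
  ultimately have "measure Q R = 0"
    using R_sets entries(1) q decseq_window_entries
    by (intro measure_eq_0_if_le_decseq[where c="1 - q" and H="window_entries M Z L t"]) auto
  then show ?thesis
    using R_sets by (intro null_setsI) (simp_all add: emeasure_eq_measure R_def t_def)
qed

lemma AE_not_avoiding_GF:
  assumes Q: "prob_space Q" "sets Q = sets (stream_space M)" and Z: "Z \<in> sets M"
    and L: "L \<noteq> []" "set L \<subseteq> sets M" and q: "0 < q" "q \<le> 1"
    and bound: "\<And>k G. G \<in> prefix_events M k \<Longrightarrow>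
      measure Q (avoiding M Z \<inter> (G \<inter> cyl_from M k L)) \<le> (1 - q) * measure Q (G \<inter> cyl_from M k L)"
  shows "AE \<omega> in Q. \<omega> \<notin> avoiding M Z \<inter> GF M L"
proof (rule AE_I')
  show "(\<Union>r<length L. avoiding M Z \<inter> {\<omega>. \<exists>\<^sub>\<infinity>i. \<omega> \<in> cyl_from M (r + i * length L) L}) \<in> null_sets Q"
    using avoiding_lattice_recurrent_null[OF assms] by (intro null_sets_UN') auto
  have "\<exists>r<length L. \<exists>\<^sub>\<infinity>i. \<omega> \<in> cyl_from M (r + i * length L) L" if "\<omega> \<in> GF M L" for \<omega>
  proof (rule INFM_residue)
    show "\<exists>\<^sub>\<infinity>k. \<omega> \<in> cyl_from M k L"
      using that vimage_sdrop_cyl[of _ M L] by (auto simp: GF_def elim!: INFM_mono)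
  qed (use L in simp)
  then show "{\<omega> \<in> space Q. \<not> \<omega> \<notin> avoiding M Z \<inter> GF M L} \<subseteq>
      (\<Union>r<length L. avoiding M Z \<inter> {\<omega>. \<exists>\<^sub>\<infinity>i. \<omega> \<in> cyl_from M (r + i * length L) L})"
    by blast
qed

theorem mainTheorem3:
  fixes M :: "'a measure" and \<kappa> :: "'a \<Rightarrow> 'a measure"
    and P :: "'a measure \<Rightarrow> 'a stream measure"
    and B :: "'a set" and m :: nat and A :: "nat \<Rightarrow> 'a set list" and p :: real
  assumes kernel: "markov_kernel M \<kappa>"
    and path: "\<forall>\<mu> \<in> Dist M. is_path_measure M \<kappa> \<mu> (P \<mu>)"
    and B: "B \<in> sets M"
    and Bt_meas: "Btilde M P B \<in> sets M"
    and m: "m \<ge> 1"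
    and A: "\<forall>j < m. A j \<noteq> [] \<and> set (A j) \<subseteq> sets M"
    and p: "p > 0"
    and cond1: "\<forall>\<mu> \<in> Dist M. measure (P \<mu>) (\<Union>j<m. GF M (A j)) = 1"
    and cond2: "\<forall>j < m. \<forall>\<nu> \<in> Dist M.
        measure (P \<nu>) (cyl M (A j)) > 0 \<longrightarrow>
        measure (cond_seq M P \<nu> (A j)) (Btilde M P B) < 1 \<longrightarrow>
        measure (P (cond_set M (cond_seq M P \<nu> (A j)) (space M - Btilde M P B))) (Ev M B) \<ge> p"
  shows "decisive M P B"
proof -
  interpret path_system M \<kappa> P
    using kernel path by unfold_locales
  let ?Z = "B \<union> Btilde M P B"
  show ?thesis
  proof (rule decisiveI_AE[OF B Bt_meas])
    fix \<mu> assume \<mu>: "\<mu> \<in> Dist M"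
    interpret prob_space "P \<mu>"
      using path_measure[OF \<mu>] by simp
    have "AE \<omega> in P \<mu>. \<omega> \<notin> avoiding M ?Z \<inter> GF M (A j)" if j: "j < m" for j
    proof (rule AE_not_avoiding_GF[OF path_measure(1,2)[OF \<mu>]])
      fix k G assume "G \<in> prefix_events M k"
      with \<mu> A B Bt_meas j cond2 show "measure (P \<mu>) (avoiding M ?Z \<inter> (G \<inter> cyl_from M k (A j))) \<le>
          (1 - min p 1) * measure (P \<mu>) (G \<inter> cyl_from M k (A j))"
        by (intro measure_avoiding_cyl_from_le) (auto intro: min.coboundedI1)
    qed (use A B Bt_meas j p in auto)
    then have "AE \<omega> in P \<mu>. \<forall>j\<in>{..<m}. \<omega> \<notin> avoiding M ?Z \<inter> GF M (A j)"
      by (intro AE_finite_allI) auto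
    moreover have "AE \<omega> in P \<mu>. \<omega> \<in> (\<Union>j<m. GF M (A j))"
      using cond1 \<mu> by (intro AE_prob_1) simp
    ultimately show "AE \<omega> in P \<mu>. \<omega> \<notin> avoiding M ?Z"
      by eventually_elim blast
  qed
qed

end
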